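(* Let $(X,g)$ be an oriented Riemannian manifold and $\beta\in\Omega^2(X)$. Then $$\operatorname{div}S_{g,\beta}=v_g(\beta)\Big\{\big\langle i(e_k)d\beta,\,(G_\beta^{-1}\circ\beta^\sharp)^\flat\big\rangle\,G_\beta^{-1}(e_k)-(G_\beta^{-1}\circ\beta^\sharp)\big((\delta_\beta\beta)^\sharp\big)\Big\}^\flat\in\Omega^1(X),$$ where $\{e_k\}$ is any local orthonormal frame (summed over $k$). In particular, if $d\beta=0$ and $\delta_\beta\beta=0$ then $\beta$ satisfies a conservation law.
   Context: Let $(X,g)$ be an oriented $n$-dimensional Riemannian manifold without boundary, with Levi-Civita connection $D$ and volume form $\mathrm{vol}_g$; $\{e_i\}$ denotes a local orthonormal frame with dual coframe $\{e^i\}$, $D_i=D_{e_i}$, and repeated indices are summed. For a 2-form $\beta$, $\beta^\sharp\in\Gamma(\mathrm{End}\,TX)$ is defined by $g(\beta^\sharp(u),w)=\beta(u,w)$. Set $G_\beta=\mathrm{id}_{TX}-\beta^\sharp\circ\beta^\sharp$ (positive definite) and $v_g(\beta)=\sqrt{\det(\mathrm{id}_{TX}+\beta^\sharp)}=(\det G_\beta)^{1/4}$. For $K\in\Gamma(\mathrm{End}\,TX)$, $K^\flat(u,w)=g(K(u),w)$; for a vector $u$, $u^\flat=g(u,\cdot)$; for a 1-form $\alpha$, $\alpha^\sharp$ is its metric dual vector. ($G_\beta^{-1}\circ\beta^\sharp$ is skew-symmetric, so $(G_\beta^{-1}\circ\beta^\sharp)^\flat$ is a 2-form; the pairing of 2-forms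 is the standard inner product.) The stress-energy tensor is $S_{g,\beta}=-g+v_g(\beta)(G_\beta^{-1})^\flat$, and the divergence of a symmetric 2-tensor $S$ is the 1-form $\operatorname{div}S=(D_iS)(e_i,\cdot)$. $\beta$ satisfies a conservation law if $\operatorname{div}S_{g,\beta}=0$. The operator $\delta_\beta:\Omega^k\to\Omega^{k-1}$ is $\delta_\beta\alpha=-\,i(G_\beta^{-1}(e_i))D_i\alpha$. *)

theory Defs
  imports "HOL-Analysis.Analysis"
begin

text \<open>Local coordinate model of an n-dimensional Riemannian manifold: an open set
U of real^'n (coordinates x^1..x^n), metric given by its coefficient matrix field
g x (g_ab = g x $ a $ b). Conventions:
 tangent vectors = component vectors u :: real^'n (u = u^a d/dx^a);
 1-forms = component vectors alpha (alpha(w) = alpha \<bullet> w);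
 covariant 2-tensors = matrices M with T(u,w) = u \<bullet> (M *v w);
 endomorphisms of TX = matrices K acting by K *v u;
 covariant 3-tensors = W with W(u,v,w) = sum u_a v_b w_c W_abc.\<close>

definition pd :: "'n::finite \<Rightarrow> (real^'n \<Rightarrow> real) \<Rightarrow> real^'n \<Rightarrow> real" where
  "pd i f x = frechet_derivative f (at x) (axis i 1)"

fun pds :: "'n::finite list \<Rightarrow> (real^'n \<Rightarrow> real) \<Rightarrow> real^'n \<Rightarrow> real" where
  "pds [] f = f"
| "pds (i # is) f = pd i (pds is f)"

definition smooth_on :: "(real^'n::finite) set \<Rightarrow> (real^'n \<Rightarrow> real) \<Rightarrow> bool" where
  "smooth_on U f \<longleftrightarrow> (\<forall>is. \<forall>x\<in>U. pds is f differentiable (at x))"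

definition smooth_matrix_on :: "(real^'n::finite) set \<Rightarrow> (real^'n \<Rightarrow> real^'n^'n) \<Rightarrow> bool" where
  "smooth_matrix_on U M \<longleftrightarrow> (\<forall>a b. smooth_on U (\<lambda>y. M y $ a $ b))"

definition riem_metric_on :: "(real^'n::finite) set \<Rightarrow> (real^'n \<Rightarrow> real^'n^'n) \<Rightarrow> bool" where
  "riem_metric_on U g \<longleftrightarrow> smooth_matrix_on U g \<and>
     (\<forall>x\<in>U. transpose (g x) = g x \<and> (\<forall>u. u \<noteq> 0 \<longrightarrow> u \<bullet> (g x *v u) > 0))"

definition two_form_on :: "(real^'n::finite) set \<Rightarrow> (real^'n \<Rightarrow> real^'n^'n) \<Rightarrow> bool" where
  "two_form_on U b \<longleftrightarrow> smooth_matrix_on U b \<and> (\<forall>x\<in>U. transpose (b x) = - b x)"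

definition ten2 :: "real^'n^'n \<Rightarrow> real^'n \<Rightarrow> real^'n \<Rightarrow> real" where
  "ten2 M u w = u \<bullet> (M *v w)"

definition gip :: "(real^'n \<Rightarrow> real^'n^'n) \<Rightarrow> real^'n \<Rightarrow> real^'n \<Rightarrow> real^'n \<Rightarrow> real" where
  "gip g x u w = ten2 (g x) u w"

definition orthonormal_frame_on :: "(real^'n::finite) set \<Rightarrow> (real^'n \<Rightarrow> real^'n^'n) \<Rightarrow> ('n \<Rightarrow> real^'n \<Rightarrow> real^'n) \<Rightarrow> bool" where
  "orthonormal_frame_on U g E \<longleftrightarrow>
     (\<forall>x\<in>U. \<forall>k l. gip g x (E k x) (E l x) = (if k = l then 1 else 0))"

definition chr :: "(real^'n::finite \<Rightarrow> real^'n^'n) \<Rightarrow> real^'n \<Rightarrow> 'n \<Rightarrow> 'n \<Rightarrow> 'n \<Rightarrow> real" where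
  "chr g x k i j = (1/2) * (\<Sum>m\<in>UNIV. matrix_inv (g x) $ k $ m *
      (pd i (\<lambda>y. g y $ m $ j) x + pd j (\<lambda>y. g y $ m $ i) x - pd m (\<lambda>y. g y $ i $ j) x))"

definition covD2 :: "(real^'n::finite \<Rightarrow> real^'n^'n) \<Rightarrow> (real^'n \<Rightarrow> real^'n^'n) \<Rightarrow> real^'n \<Rightarrow> real^'n \<Rightarrow> real^'n^'n" where
  "covD2 g T x u = (\<chi> j l. \<Sum>i\<in>UNIV. u $ i *
      (pd i (\<lambda>y. T y $ j $ l) x - (\<Sum>m\<in>UNIV. chr g x m i j * T x $ m $ l)
        - (\<Sum>m\<in>UNIV. chr g x m i l * T x $ j $ m)))"

text \<open>beta^sharp: g(beta^sharp u, w) = beta(u,w).\<close>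
definition bsharp :: "(real^'n::finite \<Rightarrow> real^'n^'n) \<Rightarrow> (real^'n \<Rightarrow> real^'n^'n) \<Rightarrow> real^'n \<Rightarrow> real^'n^'n" where
  "bsharp g b x = matrix_inv (g x) ** transpose (b x)"

text \<open>K^flat(u,w) = g(K u, w).\<close>
definition end_flat :: "(real^'n::finite \<Rightarrow> real^'n^'n) \<Rightarrow> real^'n \<Rightarrow> real^'n^'n \<Rightarrow> real^'n^'n" where
  "end_flat g x K = transpose K ** g x"

definition vflat :: "(real^'n::finite \<Rightarrow> real^'n^'n) \<Rightarrow> real^'n \<Rightarrow> real^'n \<Rightarrow> real^'n" where
  "vflat g x u = g x *v u"

definition fsharp :: "(real^'n::finite \<Rightarrow> real^'n^'n) \<Rightarrow> real^'n \<Rightarrow> real^'n \<Rightarrow> real^'n" where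
  "fsharp g x \<alpha> = matrix_inv (g x) *v \<alpha>"

definition Gb :: "(real^'n::finite \<Rightarrow> real^'n^'n) \<Rightarrow> (real^'n \<Rightarrow> real^'n^'n) \<Rightarrow> real^'n \<Rightarrow> real^'n^'n" where
  "Gb g b x = mat 1 - bsharp g b x ** bsharp g b x"

definition vg :: "(real^'n::finite \<Rightarrow> real^'n^'n) \<Rightarrow> (real^'n \<Rightarrow> real^'n^'n) \<Rightarrow> real^'n \<Rightarrow> real" where
  "vg g b x = sqrt (det (mat 1 + bsharp g b x))"

definition stress :: "(real^'n::finite \<Rightarrow> real^'n^'n) \<Rightarrow> (real^'n \<Rightarrow> real^'n^'n) \<Rightarrow> real^'n \<Rightarrow> real^'n^'n" where
  "stress g b x = - g x + vg g b x *\<^sub>R end_flat g x (matrix_inv (Gb g b x))"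

definition divT :: "(real^'n::finite \<Rightarrow> real^'n^'n) \<Rightarrow> ('n \<Rightarrow> real^'n \<Rightarrow> real^'n) \<Rightarrow> (real^'n \<Rightarrow> real^'n^'n) \<Rightarrow> real^'n \<Rightarrow> real^'n" where
  "divT g E S x = (\<chi> l. \<Sum>k\<in>UNIV. ten2 (covD2 g S x (E k x)) (E k x) (axis l 1))"

text \<open>Exterior derivative of a 2-form: (d beta)_abc = d_a beta_bc + d_b beta_ca + d_c beta_ab
  (determinant convention for wedge products).\<close>
definition dform2 :: "(real^'n::finite \<Rightarrow> real^'n^'n) \<Rightarrow> real^'n \<Rightarrow> real^'n^'n^'n" where
  "dform2 b x = (\<chi> a c e. pd a (\<lambda>y. b y $ c $ e) x + pd c (\<lambda>y. b y $ e $ a) x + pd e (\<lambda>y. b y $ a $ c) x)"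

definition interior3 :: "real^'n::finite \<Rightarrow> real^'n^'n^'n \<Rightarrow> real^'n^'n" where
  "interior3 u W = (\<chi> c e. \<Sum>a\<in>UNIV. u $ a * W $ a $ c $ e)"

text \<open>Standard inner product of 2-forms: sum over i<j of alpha(e_i,e_j) gamma(e_i,e_j).\<close>
definition ip2 :: "('n::finite \<Rightarrow> real^'n \<Rightarrow> real^'n) \<Rightarrow> real^'n \<Rightarrow> real^'n^'n \<Rightarrow> real^'n^'n \<Rightarrow> real" where
  "ip2 E x \<alpha> \<gamma> = (1/2) * (\<Sum>p\<in>UNIV. \<Sum>q\<in>UNIV. ten2 \<alpha> (E p x) (E q x) * ten2 \<gamma> (E p x) (E q x))"

definition delta_b :: "(real^'n::finite \<Rightarrow> real^'n^'n) \<Rightarrow> ('n \<Rightarrow> real^'n \<Rightarrow> real^'n) \<Rightarrow> (real^'n \<Rightarrow> real^'n^'n)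
    \<Rightarrow> (real^'n \<Rightarrow> real^'n^'n) \<Rightarrow> real^'n \<Rightarrow> real^'n" where
  "delta_b g E b \<alpha> x = (\<chi> l. - (\<Sum>i\<in>UNIV.
      ten2 (covD2 g \<alpha> x (E i x)) (matrix_inv (Gb g b x) *v E i x) (axis l 1)))"

end

(* Everything is computed at a single point in coordinates.  Write B = beta^sharp,
   G = 1 - B^2, K = G^-1, v = sqrt (det (1 + B)) and D for the Levi-Civita connection.
   Since g is parallel, D_i S is the flat of D_i (v K), and differentiating G K = 1 and
   Jacobi's formula for det (1 + B) give
     D_i (v K) = v (tr ((1 + B)^-1 D_i B) / 2 K + K (D_i B B + B D_i B) K),
   where the Christoffel terms of the trace cancel because B commutes with (1 + B)^-1.
   Contracting over an orthonormal frame, the terms K B D_i B K add up to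
   -K B (delta_beta beta)^sharp.  The remaining terms are K applied to the vector dual to
   a |-> <i(e_a) d beta, (K B)^flat>: d beta is the cyclic sum of D beta (torsion-freeness),
   and the skew-symmetry of D beta and of (K B)^flat identifies the two cyclic terms not
   containing the trace. *)

theory Submission
  imports Defs
begin

section \<open>Matrix algebra\<close>

lemma
  fixes A :: "'a::semiring_1^'n^'m"
  assumes "invertible A"
  shows matrix_inv_right: "A ** matrix_inv A = mat 1"
    and matrix_inv_left: "matrix_inv A ** A = mat 1"
  using someI_ex[OF assms[unfolded invertible_def]] unfolding matrix_inv_def by auto

lemma matrix_inv_unique:
  fixes A A' :: "'a::field^'n^'n"
  assumes "A' ** A = mat 1"
  shows "matrix_inv A = A'"
proof -
  have "invertible A" using assms invertible_left_inverse by blast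
  have "matrix_inv A = (A' ** A) ** matrix_inv A" using assms by simp
  also have "\<dots> = A'" using matrix_inv_right[OF \<open>invertible A\<close>]
    by (simp add: matrix_mul_assoc[symmetric])
  finally show ?thesis .
qed

lemma invertible_iff_trivial_kernel:
  fixes A :: "'a::field^'n^'n"
  shows "invertible A \<longleftrightarrow> (\<forall>u. A *v u = 0 \<longrightarrow> u = 0)"
  by (simp add: invertible_left_inverse matrix_left_invertible_ker)

lemma matrix_add_rdistrib: "((A::'a::semiring_1^'n^'m) + B) ** C = A ** C + B ** C"
  by (simp add: matrix_matrix_mult_def vec_eq_iff sum.distrib distrib_right)

lemma matrix_diff_ldistrib: "(A::'a::ring_1^'n^'m) ** (B - C) = A ** B - A ** C"
  by (simp add: matrix_matrix_mult_def vec_eq_iff sum_subtractf right_diff_distrib)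

lemma matrix_diff_rdistrib: "((A::'a::ring_1^'n^'m) - B) ** C = A ** C - B ** C"
  by (simp add: matrix_matrix_mult_def vec_eq_iff sum_subtractf left_diff_distrib)

lemma matrix_neg_left: "(- (A::'a::ring_1^'n^'m)) ** B = - (A ** B)"
  by (simp add: matrix_matrix_mult_def vec_eq_iff sum_negf)

lemma matrix_neg_right: "(A::'a::ring_1^'n^'m) ** (- B) = - (A ** B)"
  by (simp add: matrix_matrix_mult_def vec_eq_iff sum_negf)

lemma matrix_mult_sum_right: "(A::'a::semiring_1^'n^'m) ** (\<Sum>i\<in>S. f i) = (\<Sum>i\<in>S. A ** f i)"
  by (induct S rule: infinite_finite_induct) (simp_all add: matrix_add_ldistrib)

lemma matrix_vector_mult_sum_right:
  "(A::'a::semiring_1^'n^'m) *v (\<Sum>i\<in>S. f i) = (\<Sum>i\<in>S. A *v f i)"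
  by (induct S rule: infinite_finite_induct) (simp_all add: matrix_vector_right_distrib)

lemma matrix_vector_mult_neg_right: "(A::'a::ring_1^'n^'m) *v (- u) = - (A *v u)"
  by (simp add: matrix_vector_mult_def vec_eq_iff sum_negf)

lemma matrix_vector_mult_neg_left: "(- (A::'a::ring_1^'n^'m)) *v u = - (A *v u)"
  by (simp add: matrix_vector_mult_def vec_eq_iff sum_negf)

lemma scaleR_matrix_vector_mult: "(c *\<^sub>R (A::real^'n^'m)) *v u = c *\<^sub>R (A *v u)"
  by (simp add: matrix_vector_mult_def vec_eq_iff sum_distrib_left mult.assoc)

lemma matrix_vector_mult_axis: "((A::'a::semiring_1^'n^'m) *v axis j 1) $ i = A $ i $ j"
  by (simp add: matrix_vector_mult_def axis_def if_distrib cong: if_cong)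

lemma transpose_add: "transpose ((A::'a::semiring_1^'n^'m) + B) = transpose A + transpose B"
  by (simp add: transpose_def vec_eq_iff)

lemma transpose_diff: "transpose ((A::'a::ring_1^'n^'m) - B) = transpose A - transpose B"
  by (simp add: transpose_def vec_eq_iff)

lemma transpose_neg: "transpose (- (A::'a::ring_1^'n^'m)) = - transpose A"
  by (simp add: transpose_def vec_eq_iff)

lemma transpose_zero: "transpose (0::'a::semiring_1^'n^'m) = 0"
  by (simp add: transpose_def vec_eq_iff)

lemma transpose_nth: "transpose A $ i $ j = A $ j $ i"
  by (simp add: transpose_def)

lemmas matrix_ring_simps = matrix_add_ldistrib matrix_add_rdistrib matrix_diff_ldistrib
  matrix_diff_rdistrib matrix_neg_left matrix_neg_right scalar_matrix_assoc[symmetric]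
  matrix_scalar_ac transpose_add transpose_diff transpose_neg transpose_scalar
  matrix_transpose_mul transpose_zero

lemma trace_neg: "trace (- (A::'a::comm_ring_1^'n^'n)) = - trace A"
  by (simp add: trace_def sum_negf)

lemma trace_transpose: "trace (transpose A) = trace A"
  by (simp add: trace_def transpose_def)

lemma trace_symmetric_mult_skew:
  fixes P F :: "'a::field_char_0^'n^'n"
  assumes "transpose P = P" "transpose F = - F"
  shows "trace (P ** F) = 0"
proof -
  have "trace (P ** F) = trace (transpose (P ** F))" by (simp only: trace_transpose)
  also have "\<dots> = - trace (F ** P)"
    unfolding matrix_transpose_mul assms by (simp only: matrix_neg_left trace_neg)
  also have "\<dots> = - trace (P ** F)" by (simp only: trace_mul_sym[of F P])
  finally show ?thesis by simp
qed

lemma skew_nth: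
  assumes "transpose A = - A"
  shows "A $ i $ j = - A $ j $ i"
proof -
  have "transpose A $ j $ i = (- A) $ j $ i" using assms by simp
  then show ?thesis by (simp add: transpose_def)
qed

lemma skew_quadratic_form:
  fixes S :: "real^'n^'n"
  assumes "transpose S = - S"
  shows "u \<bullet> (S *v u) = 0"
proof -
  have "u \<bullet> (S *v u) = (u v* S) \<bullet> u" by (simp only: dot_lmul_matrix)
  also have "u v* S = transpose S *v u" by simp
  also have "\<dots> = - (S *v u)" unfolding assms by (rule matrix_vector_mult_neg_left)
  also have "(- (S *v u)) \<bullet> u = - (u \<bullet> (S *v u))" by (simp add: inner_commute)
  finally show ?thesis by simp
qed

lemma matrix_inv_nth_cramer:
  fixes A :: "real^'n^'n"
  assumes "invertible A"
  shows "matrix_inv A $ k $ c = det (\<chi> i j. if j = k then axis c 1 $ i else A $ i $ j) / det A"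
proof -
  let ?x = "matrix_inv A *v axis c 1"
  have "A *v ?x = axis c 1" using matrix_inv_right[OF assms] by (simp add: matrix_vector_mul_assoc)
  moreover have "det A \<noteq> 0" using assms invertible_det_nz by blast
  ultimately have "?x $ k = det (\<chi> i j. if j = k then axis c 1 $ i else A $ i $ j) / det A"
    using cramer[of A ?x "axis c 1"] by simp
  then show ?thesis by (simp add: matrix_vector_mult_axis)
qed

lemma det_replace_row:
  fixes A D :: "real^'n^'n"
  assumes "invertible A"
  shows "det (\<chi> j. if j = r then D $ r else A $ j) = det A * (D ** matrix_inv A) $ r $ r"
proof -
  let ?C = "D ** matrix_inv A"
  let ?A_with = "\<lambda>w. \<chi> j. if j = r then w else A $ j"
  have "D = ?C ** A" using matrix_inv_left[OF assms] by (simp add: matrix_mul_assoc[symmetric])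
  then have "D $ r = (?C ** A) $ r" by simp
  also have "\<dots> = (\<Sum>k\<in>UNIV. ?C $ r $ k *s A $ k)"
    by (simp add: vec_eq_iff matrix_matrix_mult_def sum_component)
  finally have D_row: "D $ r = (\<Sum>k\<in>UNIV. ?C $ r $ k *s A $ k)" .
  have "det (?A_with (D $ r)) = (\<Sum>k\<in>UNIV. det (?A_with (?C $ r $ k *s A $ k)))"
    unfolding D_row by (rule det_linear_row_sum) simp
  also have "\<dots> = (\<Sum>k\<in>UNIV. ?C $ r $ k * det (?A_with (A $ k)))"
    by (simp add: det_row_mul)
  also have "\<dots> = ?C $ r $ r * det (?A_with (A $ r))"
  proof (rule sum.mono_neutral_right[of UNIV "{r}", simplified])
    show "\<forall>k\<in>UNIV - {r}. ?C $ r $ k * det (?A_with (A $ k)) = 0"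
      by (auto intro!: det_identical_rows[of r] simp: row_def vec_eq_iff)
  qed
  also have "?A_with (A $ r) = A" by (simp add: vec_eq_iff)
  finally show ?thesis by (simp add: mult.commute)
qed

section \<open>Partial derivatives\<close>

lemma has_derivative_pd: "(f has_derivative D) (at x) \<Longrightarrow> pd i f x = D (axis i 1)"
  unfolding pd_def by (metis frechet_derivative_at)

lemma pd_const [simp]: "pd i (\<lambda>y. c) x = 0"
  by (simp add: has_derivative_pd[OF has_derivative_const])

lemmas has_frechet_derivative = frechet_derivative_works[THEN iffD1]

lemma pd_add:
  assumes "f differentiable (at x)" "g differentiable (at x)"
  shows "pd i (\<lambda>y. f y + g y) x = pd i f x + pd i g x"
  using has_derivative_pd[OF has_derivative_add[OF assms[THEN has_frechet_derivative]]]
  by (simp add: pd_def)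

lemma pd_diff:
  assumes "f differentiable (at x)" "g differentiable (at x)"
  shows "pd i (\<lambda>y. f y - g y) x = pd i f x - pd i g x"
  using has_derivative_pd[OF has_derivative_diff[OF assms[THEN has_frechet_derivative]]]
  by (simp add: pd_def)

lemma pd_minus:
  assumes "f differentiable (at x)"
  shows "pd i (\<lambda>y. - f y) x = - pd i f x"
  using has_derivative_pd[OF has_derivative_minus[OF assms[THEN has_frechet_derivative]]]
  by (simp add: pd_def)

lemma pd_mult:
  fixes f g :: "real^'n::finite \<Rightarrow> real"
  assumes "f differentiable (at x)" "g differentiable (at x)"
  shows "pd i (\<lambda>y. f y * g y) x = pd i f x * g x + f x * pd i g x"
  using has_derivative_pd[OF has_derivative_mult[OF assms[THEN has_frechet_derivative]]]
  by (simp add: pd_def)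

lemma pd_sum:
  fixes f :: "'k \<Rightarrow> real^'n::finite \<Rightarrow> real"
  assumes "\<And>k. k \<in> S \<Longrightarrow> f k differentiable (at x)"
  shows "pd i (\<lambda>y. \<Sum>k\<in>S. f k y) x = (\<Sum>k\<in>S. pd i (f k) x)"
  using has_derivative_pd[OF has_derivative_sum[of S f "\<lambda>k. frechet_derivative (f k) (at x)"]]
  by (simp add: assms has_frechet_derivative pd_def)

lemma has_derivative_prod_frechet:
  fixes f :: "'k \<Rightarrow> real^'n::finite \<Rightarrow> real"
  assumes "\<And>k. k \<in> S \<Longrightarrow> f k differentiable (at x)"
  shows "((\<lambda>y. \<Prod>k\<in>S. f k y) has_derivative
     (\<lambda>h. \<Sum>k\<in>S. frechet_derivative (f k) (at x) h * (\<Prod>j\<in>S - {k}. f j x))) (at x)"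
  using has_derivative_prod[of S f "\<lambda>k. frechet_derivative (f k) (at x)"]
  by (simp add: assms has_frechet_derivative)

lemma differentiable_prod:
  fixes f :: "'k \<Rightarrow> real^'n::finite \<Rightarrow> real"
  shows "(\<And>k. k \<in> S \<Longrightarrow> f k differentiable (at x)) \<Longrightarrow> (\<lambda>y. \<Prod>k\<in>S. f k y) differentiable (at x)"
  using has_derivative_prod_frechet unfolding differentiable_def by blast

lemma pd_prod:
  fixes f :: "'k \<Rightarrow> real^'n::finite \<Rightarrow> real"
  assumes "\<And>k. k \<in> S \<Longrightarrow> f k differentiable (at x)"
  shows "pd i (\<lambda>y. \<Prod>k\<in>S. f k y) x = (\<Sum>k\<in>S. pd i (f k) x * (\<Prod>j\<in>S - {k}. f j x))"
  using has_derivative_pd[OF has_derivative_prod_frechet[OF assms]] by (simp add: pd_def)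

lemma pd_cong_open:
  assumes "open U" "x \<in> U" "\<And>y. y \<in> U \<Longrightarrow> f y = g y"
  shows "pd i f x = pd i g x"
proof -
  have "(f has_derivative D) (at x) \<longleftrightarrow> (g has_derivative D) (at x)" for D
    using has_derivative_transform_within_open[of f D x UNIV U g]
      has_derivative_transform_within_open[of g D x UNIV U f] assms by auto
  then show ?thesis unfolding pd_def frechet_derivative_def by simp
qed

lemma differentiable_cong_open:
  assumes "open U" "x \<in> U" "\<And>y. y \<in> U \<Longrightarrow> f y = g y" "f differentiable (at x)"
  shows "g differentiable (at x)"
  using assms has_derivative_transform_within_open[of f _ x UNIV U g]
  unfolding differentiable_def by blast

text \<open>Since sqrt is odd on the reals, this also holds for d < 0.\<close>

lemma DERIV_real_sqrt_nonzero: "d \<noteq> 0 \<Longrightarrow> DERIV sqrt d :> sqrt d / (2 * d)"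
  by (rule DERIV_real_sqrt_generic) (auto simp: field_simps real_sqrt_minus[symmetric])

lemma
  fixes f :: "real^'n::finite \<Rightarrow> real"
  assumes "f differentiable (at x)" "f x \<noteq> 0"
  shows differentiable_sqrt: "(\<lambda>y. sqrt (f y)) differentiable (at x)"
    and pd_sqrt: "pd i (\<lambda>y. sqrt (f y)) x = sqrt (f x) / 2 * (pd i f x / f x)"
proof -
  have "((\<lambda>y. sqrt (f y)) has_derivative
      (\<lambda>h. frechet_derivative f (at x) h * (sqrt (f x) / (2 * f x)))) (at x)"
    using DERIV_compose_FDERIV[where f=sqrt and g=f, OF DERIV_real_sqrt_nonzero[OF assms(2)]]
      assms(1)
    by (simp add: has_frechet_derivative)
  then show "(\<lambda>y. sqrt (f y)) differentiable (at x)"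
    and "pd i (\<lambda>y. sqrt (f y)) x = sqrt (f x) / 2 * (pd i f x / f x)"
    unfolding differentiable_def by (auto dest: has_derivative_pd[where i=i] simp: pd_def)
qed

definition matrix_differentiable ::
    "(real^'n::finite \<Rightarrow> real^'c::finite^'r::finite) \<Rightarrow> real^'n \<Rightarrow> bool" where
  "matrix_differentiable M x \<longleftrightarrow> (\<forall>a b. (\<lambda>y. M y $ a $ b) differentiable (at x))"

definition matrix_pd ::
    "'n::finite \<Rightarrow> (real^'n \<Rightarrow> real^'c::finite^'r::finite) \<Rightarrow> real^'n \<Rightarrow> real^'c^'r" where
  "matrix_pd i M x = (\<chi> a b. pd i (\<lambda>y. M y $ a $ b) x)"

lemma matrix_differentiableD: "matrix_differentiable M x \<Longrightarrow> (\<lambda>y. M y $ a $ b) differentiable (at x)"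
  by (simp add: matrix_differentiable_def)

lemma matrix_differentiable_const: "matrix_differentiable (\<lambda>y. C) x"
  by (simp add: matrix_differentiable_def)

lemma matrix_pd_const: "matrix_pd i (\<lambda>y. C) x = 0"
  by (simp add: matrix_pd_def vec_eq_iff)

lemma matrix_differentiable_add:
  "matrix_differentiable M x \<Longrightarrow> matrix_differentiable N x \<Longrightarrow> matrix_differentiable (\<lambda>y. M y + N y) x"
  by (simp add: matrix_differentiable_def)

lemma matrix_pd_add:
  "matrix_differentiable M x \<Longrightarrow> matrix_differentiable N x \<Longrightarrow>
    matrix_pd i (\<lambda>y. M y + N y) x = matrix_pd i M x + matrix_pd i N x"
  by (simp add: matrix_pd_def vec_eq_iff pd_add matrix_differentiableD)

lemma matrix_differentiable_diff:
  "matrix_differentiable M x \<Longrightarrow> matrix_differentiable N x \<Longrightarrow> matrix_differentiable (\<lambda>y. M y - N y) x"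
  by (simp add: matrix_differentiable_def)

lemma matrix_pd_diff:
  "matrix_differentiable M x \<Longrightarrow> matrix_differentiable N x \<Longrightarrow>
    matrix_pd i (\<lambda>y. M y - N y) x = matrix_pd i M x - matrix_pd i N x"
  by (simp add: matrix_pd_def vec_eq_iff pd_diff matrix_differentiableD)

lemma matrix_differentiable_uminus:
  "matrix_differentiable M x \<Longrightarrow> matrix_differentiable (\<lambda>y. - M y) x"
  by (simp add: matrix_differentiable_def)

lemma matrix_pd_uminus: "matrix_differentiable M x \<Longrightarrow> matrix_pd i (\<lambda>y. - M y) x = - matrix_pd i M x"
  by (simp add: matrix_pd_def vec_eq_iff pd_minus matrix_differentiableD)

lemma matrix_differentiable_transpose:
  "matrix_differentiable M x \<Longrightarrow> matrix_differentiable (\<lambda>y. transpose (M y)) x"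
  by (simp add: matrix_differentiable_def transpose_def)

lemma matrix_pd_transpose: "matrix_pd i (\<lambda>y. transpose (M y)) x = transpose (matrix_pd i M x)"
  by (simp add: matrix_pd_def vec_eq_iff transpose_def)

lemma matrix_differentiable_scaleR:
  "c differentiable (at x) \<Longrightarrow> matrix_differentiable M x \<Longrightarrow> matrix_differentiable (\<lambda>y. c y *\<^sub>R M y) x"
  by (simp add: matrix_differentiable_def)

lemma matrix_pd_scaleR:
  "c differentiable (at x) \<Longrightarrow> matrix_differentiable M x \<Longrightarrow>
    matrix_pd i (\<lambda>y. c y *\<^sub>R M y) x = pd i c x *\<^sub>R M x + c x *\<^sub>R matrix_pd i M x"
  by (simp add: matrix_pd_def vec_eq_iff pd_mult matrix_differentiableD)

lemma matrix_differentiable_mult: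
  "matrix_differentiable M x \<Longrightarrow> matrix_differentiable N x \<Longrightarrow> matrix_differentiable (\<lambda>y. M y ** N y) x"
  by (simp add: matrix_differentiable_def matrix_matrix_mult_def matrix_differentiableD)

lemma matrix_pd_mult:
  assumes M: "matrix_differentiable M x" and N: "matrix_differentiable N x"
  shows "matrix_pd i (\<lambda>y. M y ** N y) x = matrix_pd i M x ** N x + M x ** matrix_pd i N x"
proof -
  have "matrix_pd i (\<lambda>y. M y ** N y) x $ a $ b
      = (matrix_pd i M x ** N x + M x ** matrix_pd i N x) $ a $ b" for a b
  proof -
    have "matrix_pd i (\<lambda>y. M y ** N y) x $ a $ b = pd i (\<lambda>y. \<Sum>k\<in>UNIV. M y $ a $ k * N y $ k $ b) x"
      by (simp add: matrix_pd_def matrix_matrix_mult_def)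
    also have "\<dots> = (\<Sum>k\<in>UNIV. pd i (\<lambda>y. M y $ a $ k * N y $ k $ b) x)"
      by (rule pd_sum)
        (intro differentiable_mult matrix_differentiableD[OF M] matrix_differentiableD[OF N])
    also have "\<dots> = (\<Sum>k\<in>UNIV. pd i (\<lambda>y. M y $ a $ k) x * N x $ k $ b
        + M x $ a $ k * pd i (\<lambda>y. N y $ k $ b) x)"
      by (intro sum.cong refl pd_mult matrix_differentiableD[OF M] matrix_differentiableD[OF N])
    also have "\<dots> = (matrix_pd i M x ** N x + M x ** matrix_pd i N x) $ a $ b"
      by (simp add: matrix_pd_def matrix_matrix_mult_def sum.distrib)
    finally show ?thesis .
  qed
  then show ?thesis by (simp add: vec_eq_iff)
qed

lemma matrix_pd_cong_open:
  assumes "open U" "x \<in> U" "\<And>y. y \<in> U \<Longrightarrow> M y = N y"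
  shows "matrix_pd i M x = matrix_pd i N x"
proof -
  have "pd i (\<lambda>y. M y $ a $ b) x = pd i (\<lambda>y. N y $ a $ b) x" for a b
    by (rule pd_cong_open[OF assms(1,2)]) (simp add: assms(3))
  then show ?thesis by (simp add: matrix_pd_def)
qed

lemma det_differentiable:
  assumes "matrix_differentiable M x"
  shows "(\<lambda>y. det (M y)) differentiable (at x)"
  unfolding det_def
  by (intro differentiable_sum ballI differentiable_mult differentiable_const differentiable_prod
      matrix_differentiableD[OF assms]) simp

lemma pd_det_rows:
  assumes "matrix_differentiable M x"
  shows "pd i (\<lambda>y. det (M y)) x =
    (\<Sum>r\<in>UNIV. det (\<chi> j. if j = r then matrix_pd i M x $ r else M x $ j))"
proof -
  let ?M' = "\<lambda>r. \<chi> j. if j = r then matrix_pd i M x $ r else M x $ j"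
  have prod_row: "(\<Prod>j\<in>UNIV. ?M' r $ j $ p j)
      = matrix_pd i M x $ r $ p r * (\<Prod>j\<in>UNIV - {r}. M x $ j $ p j)" for p r
  proof -
    have "(\<Prod>j\<in>UNIV - {r}. ?M' r $ j $ p j) = (\<Prod>j\<in>UNIV - {r}. M x $ j $ p j)"
      by (rule prod.cong) simp_all
    then show ?thesis by (simp add: prod.remove[of UNIV r])
  qed
  have "pd i (\<lambda>y. det (M y)) x =
      (\<Sum>p\<in>{p. p permutes UNIV}. of_int (sign p) *
        (\<Sum>r\<in>UNIV. matrix_pd i M x $ r $ p r * (\<Prod>j\<in>UNIV - {r}. M x $ j $ p j)))"
    unfolding det_def
    by (simp add: pd_sum pd_mult pd_prod differentiable_prod matrix_differentiableD[OF assms]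
        matrix_pd_def)
  also have "\<dots> = (\<Sum>r\<in>UNIV. \<Sum>p\<in>{p. p permutes UNIV}. of_int (sign p) * (\<Prod>j\<in>UNIV. ?M' r $ j $ p j))"
    unfolding prod_row by (simp add: sum_distrib_left mult.assoc) (rule sum.swap)
  finally show ?thesis by (simp only: det_def)
qed

lemma pd_det:
  assumes "matrix_differentiable M x" "invertible (M x)"
  shows "pd i (\<lambda>y. det (M y)) x = det (M x) * trace (matrix_inv (M x) ** matrix_pd i M x)"
proof -
  have "pd i (\<lambda>y. det (M y)) x
      = (\<Sum>r\<in>UNIV. det (M x) * (matrix_pd i M x ** matrix_inv (M x)) $ r $ r)"
    unfolding pd_det_rows[OF assms(1)] det_replace_row[OF assms(2)] ..
  also have "\<dots> = det (M x) * trace (matrix_pd i M x ** matrix_inv (M x))"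
    by (simp add: trace_def sum_distrib_left)
  also have "trace (matrix_pd i M x ** matrix_inv (M x))
      = trace (matrix_inv (M x) ** matrix_pd i M x)"
    by (rule trace_mul_sym)
  finally show ?thesis .
qed

lemma matrix_differentiable_inv:
  fixes M :: "real^'n::finite \<Rightarrow> real^'m::finite^'m"
  assumes "open U" "x \<in> U" and inv: "\<And>y. y \<in> U \<Longrightarrow> invertible (M y)"
    and M: "matrix_differentiable M x"
  shows "matrix_differentiable (\<lambda>y. matrix_inv (M y)) x"
  unfolding matrix_differentiable_def
proof (intro allI)
  fix k c
  let ?N = "\<lambda>y. (\<chi> i j. if j = k then axis c 1 $ i else M y $ i $ j) :: real^'m^'m"
  have "matrix_differentiable ?N x"
    unfolding matrix_differentiable_def
  proof (intro allI)
    fix a b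
    show "(\<lambda>y. ?N y $ a $ b) differentiable (at x)"
      by (cases "b = k") (simp_all add: matrix_differentiableD[OF M])
  qed
  then have "(\<lambda>y. det (?N y) / det (M y)) differentiable (at x)"
    using M inv[OF assms(2)] invertible_det_nz
    by (intro differentiable_divide det_differentiable) auto
  then show "(\<lambda>y. matrix_inv (M y) $ k $ c) differentiable (at x)"
    by (rule differentiable_cong_open[OF assms(1,2), rotated]) (simp add: matrix_inv_nth_cramer inv)
qed

lemma matrix_pd_inv:
  fixes M :: "real^'n::finite \<Rightarrow> real^'m::finite^'m"
  assumes U: "open U" "x \<in> U" and inv: "\<And>y. y \<in> U \<Longrightarrow> invertible (M y)"
    and M: "matrix_differentiable M x"
  shows "matrix_pd i (\<lambda>y. matrix_inv (M y)) x
    = - (matrix_inv (M x) ** matrix_pd i M x ** matrix_inv (M x))"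
proof -
  let ?N = "\<lambda>y. matrix_inv (M y)"
  have "matrix_pd i (\<lambda>y. M y ** ?N y) x = matrix_pd i (\<lambda>y. mat 1) x"
    by (rule matrix_pd_cong_open[OF U]) (simp add: matrix_inv_right inv)
  then have "matrix_pd i M x ** ?N x + M x ** matrix_pd i ?N x = 0"
    by (simp add: matrix_pd_mult[OF M matrix_differentiable_inv[OF U inv M]] matrix_pd_const)
  then have "?N x ** (matrix_pd i M x ** ?N x + M x ** matrix_pd i ?N x) = 0"
    by simp
  then have "?N x ** matrix_pd i M x ** ?N x + matrix_pd i ?N x = 0"
    by (simp add: matrix_add_ldistrib matrix_mul_assoc matrix_inv_left[OF inv[OF U(2)]])
  then show ?thesis by (simp add: eq_neg_iff_add_eq_0 add.commute)
qed

section \<open>Contractions with a frame\<close>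

definition frobenius :: "real^'n::finite^'m::finite \<Rightarrow> real^'n^'m \<Rightarrow> real" where
  "frobenius A A' = (\<Sum>p\<in>UNIV. \<Sum>q\<in>UNIV. A $ p $ q * A' $ p $ q)"

lemma frobenius_eq_trace: "frobenius A A' = trace (transpose A ** A')"
  by (simp add: frobenius_def trace_def matrix_matrix_mult_def transpose_def) (rule sum.swap)

lemma frobenius_interior3: "frobenius (interior3 u W) A = (\<Sum>a\<in>UNIV. u $ a * frobenius (W $ a) A)"
proof -
  have "frobenius (interior3 u W) A
      = (\<Sum>p\<in>UNIV. \<Sum>q\<in>UNIV. \<Sum>a\<in>UNIV. u $ a * W $ a $ p $ q * A $ p $ q)"
    by (simp add: frobenius_def interior3_def sum_distrib_right)
  also have "\<dots> = (\<Sum>a\<in>UNIV. \<Sum>p\<in>UNIV. \<Sum>q\<in>UNIV. u $ a * W $ a $ p $ q * A $ p $ q)"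
    by (subst sum.swap) (intro sum.cong refl sum.swap)
  also have "\<dots> = (\<Sum>a\<in>UNIV. u $ a * frobenius (W $ a) A)"
    by (simp add: frobenius_def sum_distrib_left mult.assoc)
  finally show ?thesis .
qed

lemma ten2_matrix_vector_mult_left: "ten2 M (A *v u) w = ten2 (transpose A ** M) u w"
proof -
  have "A *v u = u v* transpose A" by simp
  then show ?thesis unfolding ten2_def by (simp only: dot_lmul_matrix matrix_vector_mul_assoc)
qed

lemma ten2_axis_right: "ten2 M u (axis l 1) = (\<Sum>j\<in>UNIV. u $ j * M $ j $ l)"
  by (simp add: ten2_def inner_vec_def matrix_vector_mult_axis)

lemma sum_ten2_frame:
  fixes E :: "'n::finite \<Rightarrow> real^'n" and Y :: "'n \<Rightarrow> real^'n^'n"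
  shows "(\<Sum>k\<in>UNIV. ten2 (\<Sum>i\<in>UNIV. E k $ i *\<^sub>R Y i) (E k) (axis l 1))
       = (\<Sum>i\<in>UNIV. \<Sum>j\<in>UNIV. (\<Sum>k\<in>UNIV. E k $ i * E k $ j) * Y i $ j $ l)"
proof -
  have "(\<Sum>k\<in>UNIV. ten2 (\<Sum>i\<in>UNIV. E k $ i *\<^sub>R Y i) (E k) (axis l 1))
     = (\<Sum>k\<in>UNIV. \<Sum>j\<in>UNIV. \<Sum>i\<in>UNIV. E k $ i * E k $ j * Y i $ j $ l)"
    by (simp add: ten2_axis_right sum_component sum_distrib_left mult_ac)
  also have "\<dots> = (\<Sum>i\<in>UNIV. \<Sum>j\<in>UNIV. \<Sum>k\<in>UNIV. E k $ i * E k $ j * Y i $ j $ l)"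
    by (subst sum.swap) (subst (2) sum.swap, subst sum.swap, rule refl)
  also have "\<dots> = (\<Sum>i\<in>UNIV. \<Sum>j\<in>UNIV. (\<Sum>k\<in>UNIV. E k $ i * E k $ j) * Y i $ j $ l)"
    by (simp add: sum_distrib_right)
  finally show ?thesis .
qed

lemma ip2_eq_frobenius:
  assumes "\<And>i j. (\<Sum>k\<in>UNIV. E k x $ i * E k x $ j) = H $ i $ j"
  shows "ip2 E x A A' = 1/2 * frobenius A (H ** A' ** H)"
proof -
  define P where "P = (\<chi> a k. E k x $ a)"
  have "P ** transpose P = H"
    using assms by (simp add: P_def matrix_matrix_mult_def transpose_def vec_eq_iff)
  then have PP: "Y ** P ** transpose P = Y ** H" for Y :: "real^_^_"
    by (simp add: matrix_mul_assoc[symmetric])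
  have ten2_P: "ten2 M (E p x) (E q x) = (transpose P ** M ** P) $ p $ q" for M p q
    by (simp add: ten2_def P_def inner_vec_def matrix_vector_mult_def matrix_matrix_mult_def
        transpose_def sum_distrib_left sum_distrib_right mult_ac) (rule sum.swap)
  have "ip2 E x A A' = 1/2 * frobenius (transpose P ** A ** P) (transpose P ** A' ** P)"
    by (simp add: ip2_def frobenius_def ten2_P)
  also have "frobenius (transpose P ** A ** P) (transpose P ** A' ** P)
      = trace ((transpose A ** P ** (transpose P ** A' ** P)) ** transpose P)"
    unfolding frobenius_eq_trace
    using trace_mul_sym[of "transpose P" "transpose A ** P ** (transpose P ** A' ** P)"]
    by (simp add: matrix_transpose_mul matrix_mul_assoc)
  also have "\<dots> = frobenius A (H ** A' ** H)"
    by (simp add: frobenius_eq_trace matrix_mul_assoc PP)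
  finally show ?thesis .
qed

section \<open>A metric and a two-form at a point\<close>

locale metric_two_form =
  fixes g \<beta> :: "real^'n::finite^'n"
  assumes g_symmetric: "transpose g = g"
    and g_positive: "\<And>u. u \<noteq> 0 \<Longrightarrow> u \<bullet> (g *v u) > 0"
    and \<beta>_skew: "transpose \<beta> = - \<beta>"
begin

definition "h = matrix_inv g"
definition "B = h ** transpose \<beta>"
definition "G = mat 1 - B ** B"
definition "K = matrix_inv G"
definition "L = matrix_inv (mat 1 + B)"
definition "v = sqrt (det (mat 1 + B))"

lemma g_nonneg: "u \<bullet> (g *v u) \<ge> 0"
  using g_positive[of u] by (cases "u = 0") auto

lemma g_invertible: "invertible g"
  unfolding invertible_iff_trivial_kernel using g_positive by fastforce

lemma h_g: "h ** g = mat 1"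
  by (simp add: h_def matrix_inv_left g_invertible)

lemma g_h: "g ** h = mat 1"
  by (simp add: h_def matrix_inv_right g_invertible)

lemma h_g_mult: "h ** (g ** X) = X"
  by (simp add: matrix_mul_assoc h_g)

lemma g_h_mult: "g ** (h ** X) = X"
  by (simp add: matrix_mul_assoc g_h)

lemma h_symmetric: "transpose h = h"
proof -
  have "transpose h ** g = transpose (g ** h)"
    by (simp add: matrix_transpose_mul g_symmetric)
  then have "transpose h ** g = mat 1" by (simp add: g_h)
  then show ?thesis unfolding h_def by (rule matrix_inv_unique[symmetric])
qed

lemma g_B: "g ** B = transpose \<beta>"
  by (simp add: B_def g_h_mult)

lemma transpose_B: "transpose B = - (transpose \<beta> ** h)"
  by (simp add: B_def matrix_transpose_mul h_symmetric \<beta>_skew matrix_neg_left transpose_neg)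

lemma G_invertible: "invertible G"
  unfolding invertible_iff_trivial_kernel
proof (intro allI impI)
  fix u assume "G *v u = 0"
  then have u: "u = B *v (B *v u)"
    by (simp add: G_def matrix_vector_mult_diff_rdistrib matrix_vector_mul_assoc)
  define w where "w = B *v u"
  have gw: "g *v w = transpose \<beta> *v u"
    by (simp add: w_def matrix_vector_mul_assoc g_B)
  have "g *v u = g *v (B *v w)" unfolding w_def by (rule arg_cong[OF u])
  then have "u \<bullet> (g *v u) = u \<bullet> (transpose \<beta> *v w)"
    by (simp only: matrix_vector_mul_assoc g_B)
  also have "\<dots> = (u v* transpose \<beta>) \<bullet> w" by (simp only: dot_lmul_matrix)
  also have "u v* transpose \<beta> = \<beta> *v u" by simp
  also have "\<dots> = - (g *v w)" unfolding gw \<beta>_skew matrix_vector_mult_neg_left by simp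
  finally have "u \<bullet> (g *v u) = - (w \<bullet> (g *v w))"
    by (simp only: inner_minus_left inner_minus_right inner_commute)
  then have "u \<bullet> (g *v u) \<le> 0" using g_nonneg[of w] by simp
  then show "u = 0" using g_positive[of u] by fastforce
qed

lemma one_plus_B_invertible: "invertible (mat 1 + B)"
  unfolding invertible_iff_trivial_kernel
proof (intro allI impI)
  fix u assume "(mat 1 + B) *v u = 0"
  then have "u = - (B *v u)"
    by (simp add: matrix_vector_mult_add_rdistrib eq_neg_iff_add_eq_0)
  then have "u \<bullet> (g *v u) = - (u \<bullet> (transpose \<beta> *v u))"
    by (metis g_B inner_minus_right matrix_vector_mul_assoc matrix_vector_mult_neg_right)
  also have "\<dots> = 0"
    using skew_quadratic_form[of "transpose \<beta>"] \<beta>_skew by (simp add: transpose_neg)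
  finally show "u = 0" using g_positive[of u] by fastforce
qed

lemma K_G: "K ** G = mat 1"
  by (simp add: K_def matrix_inv_left G_invertible)

lemma G_K: "G ** K = mat 1"
  by (simp add: K_def matrix_inv_right G_invertible)

lemma L_one_plus_B: "L ** (mat 1 + B) = mat 1"
  by (simp add: L_def matrix_inv_left one_plus_B_invertible)

lemma B_G_commute: "B ** G = G ** B"
  by (simp add: G_def matrix_diff_ldistrib matrix_diff_rdistrib matrix_mul_assoc)

lemma B_K_commute: "B ** K = K ** B"
proof -
  have "K ** B = K ** B ** (G ** K)" by (simp add: G_K)
  also have "\<dots> = K ** (B ** G) ** K" by (simp add: matrix_mul_assoc)
  also have "\<dots> = (K ** G) ** B ** K" by (simp add: B_G_commute matrix_mul_assoc)
  finally show ?thesis by (simp add: K_G)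
qed

lemma L_eq: "L = (mat 1 - B) ** K"
proof -
  have "(mat 1 + B) ** ((mat 1 - B) ** K) = G ** K"
    by (simp add: G_def matrix_add_rdistrib matrix_diff_ldistrib matrix_diff_rdistrib
        matrix_mul_assoc)
  then have "(mat 1 + B) ** ((mat 1 - B) ** K) = mat 1" by (simp add: G_K)
  then have "L = (L ** (mat 1 + B)) ** ((mat 1 - B) ** K)"
    by (simp add: matrix_mul_assoc[symmetric])
  then show ?thesis by (simp add: L_one_plus_B)
qed

lemma B_L_commute: "B ** L = L ** B"
  by (simp add: L_eq matrix_diff_ldistrib matrix_diff_rdistrib matrix_mul_assoc B_K_commute)

lemma G_self_adjoint: "transpose G ** g = g ** G"
proof -
  have "transpose (B ** B) ** g = transpose \<beta> ** h ** transpose \<beta>"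
    by (simp add: matrix_transpose_mul transpose_B matrix_neg_left matrix_neg_right
        matrix_mul_assoc[symmetric] h_g)
  moreover have "g ** (B ** B) = transpose \<beta> ** h ** transpose \<beta>"
    by (simp add: B_def matrix_mul_assoc g_h)
  ultimately show ?thesis
    by (simp add: G_def transpose_diff matrix_diff_ldistrib matrix_diff_rdistrib g_symmetric)
qed

lemma K_self_adjoint: "transpose K ** g = g ** K"
proof -
  have "transpose K ** g = transpose K ** (g ** G) ** K"
    by (simp add: G_K matrix_mul_assoc[symmetric])
  also have "\<dots> = transpose (G ** K) ** g ** K"
    by (simp add: G_self_adjoint[symmetric] matrix_mul_assoc matrix_transpose_mul)
  finally show ?thesis by (simp add: G_K)
qed

lemma K_h_symmetric: "transpose (K ** h) = K ** h"
proof -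
  have "transpose (K ** h) = h ** (transpose K ** g) ** h"
    by (simp add: matrix_transpose_mul h_symmetric matrix_mul_assoc[symmetric] g_h)
  also have "\<dots> = K ** h" by (simp add: K_self_adjoint matrix_mul_assoc h_g)
  finally show ?thesis .
qed

end

section \<open>Covariant derivatives at a point\<close>

text \<open>The values at a point of g, \<beta>, their coordinate derivatives dg i, d\<beta> i, the
  Christoffel symbols \<Gamma> i $ m $ j = Gamma^m_ij and an orthonormal frame.  In the
  definitions below a lower-case d marks a coordinate derivative, an upper-case D the
  covariant derivative.\<close>

locale levi_civita_jet = metric_two_form g \<beta> for g \<beta> :: "real^'n::finite^'n" +
  fixes \<Gamma> dg d\<beta> :: "'n \<Rightarrow> real^'n^'n"
    and E :: "'n \<Rightarrow> real^'n"
  assumes d\<beta>_skew: "\<And>i. transpose (d\<beta> i) = - d\<beta> i"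
    and metric_compatible: "\<And>i. dg i = transpose (\<Gamma> i) ** g + g ** \<Gamma> i"
    and torsion_free: "\<And>i j m. \<Gamma> i $ m $ j = \<Gamma> j $ m $ i"
    and orthonormal: "\<And>k l. E k \<bullet> (g *v E l) = (if k = l then 1 else 0)"
begin

definition "dB i = - (h ** dg i ** h) ** transpose \<beta> + h ** transpose (d\<beta> i)"
definition "dG i = - (dB i ** B + B ** dB i)"
definition "dK i = - (K ** dG i ** K)"
definition "S = - g + v *\<^sub>R (transpose K ** g)"

text \<open>By Jacobi's formula, v / 2 * trace (L ** dB i) is the derivative of v.\<close>

definition "dS i = - dg i + (v / 2 * trace (L ** dB i)) *\<^sub>R (transpose K ** g)
    + v *\<^sub>R (transpose (dK i) ** g + transpose K ** dg i)"
definition "DS i = dS i - transpose (\<Gamma> i) ** S - S ** \<Gamma> i"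
definition "D\<beta> i = d\<beta> i - transpose (\<Gamma> i) ** \<beta> - \<beta> ** \<Gamma> i"
definition "DB i = h ** transpose (D\<beta> i)"
definition "DvK i = v *\<^sub>R ((trace (L ** DB i) / 2) *\<^sub>R K + K ** (DB i ** B + B ** DB i) ** K)"

lemma DB_eq: "DB i = dB i + \<Gamma> i ** B - B ** \<Gamma> i"
  by (simp add: DB_def D\<beta>_def dB_def B_def metric_compatible matrix_ring_simps \<beta>_skew
      matrix_mul_assoc[symmetric] h_g_mult g_h_mult algebra_simps)

lemma commutator_K: "\<Gamma> i ** K - K ** \<Gamma> i = K ** (\<Gamma> i ** B ** B - B ** B ** \<Gamma> i) ** K"
proof -
  have "\<Gamma> i ** K - K ** \<Gamma> i = K ** (G ** \<Gamma> i - \<Gamma> i ** G) ** K"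
    by (simp add: matrix_diff_ldistrib matrix_diff_rdistrib matrix_mul_assoc K_G)
      (simp add: matrix_mul_assoc[symmetric] G_K)
  also have "G ** \<Gamma> i - \<Gamma> i ** G = \<Gamma> i ** B ** B - B ** B ** \<Gamma> i"
    by (simp add: G_def matrix_diff_ldistrib matrix_diff_rdistrib matrix_mul_assoc)
  finally show ?thesis .
qed

lemma DK_eq: "dK i + \<Gamma> i ** K - K ** \<Gamma> i = K ** (DB i ** B + B ** DB i) ** K"
proof -
  have "dK i + \<Gamma> i ** K - K ** \<Gamma> i = dK i + (\<Gamma> i ** K - K ** \<Gamma> i)" by simp
  also have "\<dots> = K ** (dB i ** B + B ** dB i) ** K + K ** (\<Gamma> i ** B ** B - B ** B ** \<Gamma> i) ** K"
    by (simp add: commutator_K dK_def dG_def matrix_ring_simps)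
  also have "\<dots> = K ** (DB i ** B + B ** DB i) ** K"
    by (simp add: DB_eq matrix_ring_simps matrix_mul_assoc algebra_simps)
  finally show ?thesis .
qed

lemma trace_L_dB: "trace (L ** dB i) = trace (L ** DB i)"
proof -
  have "trace (L ** DB i) = trace (L ** dB i) + trace (L ** \<Gamma> i ** B) - trace (L ** B ** \<Gamma> i)"
    by (simp add: DB_eq matrix_ring_simps trace_add trace_sub matrix_mul_assoc)
  also have "trace (L ** \<Gamma> i ** B) = trace (L ** B ** \<Gamma> i)"
    using trace_mul_sym[of "L ** \<Gamma> i" B] by (simp add: matrix_mul_assoc B_L_commute)
  finally show ?thesis by simp
qed

lemma DS_eq: "DS i = transpose (DvK i) ** g"
proof -
  have "DS i = (v / 2 * trace (L ** DB i)) *\<^sub>R (transpose K ** g)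
      + v *\<^sub>R (transpose (dK i + \<Gamma> i ** K - K ** \<Gamma> i) ** g)"
    by (simp add: DS_def dS_def S_def trace_L_dB metric_compatible matrix_ring_simps
        matrix_mul_assoc algebra_simps)
  also have "\<dots> = transpose (DvK i) ** g"
    by (simp only: DK_eq DvK_def transpose_add transpose_scalar matrix_add_rdistrib
        scalar_matrix_assoc[symmetric] scaleR_add_right scaleR_scaleR) (simp add: algebra_simps)
  finally show ?thesis .
qed

lemma frame_outer_sum: "(\<Sum>k\<in>UNIV. E k $ i * E k $ j) = h $ i $ j"
proof -
  define P where "P = (\<chi> a k. E k $ a)"
  have "(transpose P ** g ** P) $ k $ l = E k \<bullet> (g *v E l)" for k l
    by (simp add: P_def matrix_matrix_mult_def transpose_def inner_vec_def matrix_vector_mult_def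
        sum_distrib_left sum_distrib_right mult_ac) (rule sum.swap)
  then have "(transpose P ** g) ** P = mat 1" by (simp add: orthonormal vec_eq_iff mat_def)
  then have "(P ** transpose P) ** g = mat 1"
    using matrix_left_right_inverse by (metis matrix_mul_assoc)
  then have "h = P ** transpose P" unfolding h_def by (rule matrix_inv_unique)
  then show ?thesis by (simp add: P_def matrix_matrix_mult_def transpose_def)
qed

lemma frame_expansion: "(\<Sum>k\<in>UNIV. (E k \<bullet> c) *\<^sub>R E k) = h *v c"
proof -
  have h_nth: "h $ a $ m = h $ m $ a" for a m
    using transpose_nth[of h m a] by (simp add: h_symmetric)
  have "(\<Sum>k\<in>UNIV. (E k \<bullet> c) *\<^sub>R E k) $ m = (\<Sum>k\<in>UNIV. \<Sum>a\<in>UNIV. E k $ a * E k $ m * c $ a)" for m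
    by (simp add: inner_vec_def sum_component sum_distrib_left mult_ac)
  also have "\<dots> m = (\<Sum>a\<in>UNIV. \<Sum>k\<in>UNIV. E k $ a * E k $ m * c $ a)" for m
    by (rule sum.swap)
  also have "\<dots> m = (\<Sum>a\<in>UNIV. h $ a $ m * c $ a)" for m
    by (simp add: sum_distrib_right[symmetric] frame_outer_sum)
  also have "\<dots> m = (h *v c) $ m" for m
    by (simp add: matrix_vector_mult_def h_nth mult.commute)
  finally show ?thesis by (simp add: vec_eq_iff)
qed

lemma D\<beta>_skew: "transpose (D\<beta> i) = - D\<beta> i"
  by (simp add: D\<beta>_def matrix_ring_simps d\<beta>_skew \<beta>_skew algebra_simps)

definition "cyclic_D\<beta> = (\<chi> a c e. D\<beta> a $ c $ e + D\<beta> c $ e $ a + D\<beta> e $ a $ c)"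
definition "\<Phi> = transpose (K ** B) ** g"
definition "\<Psi> = transpose (B ** K ** h)"

text \<open>\<Psi> is \<Phi> with both indices raised, so \<theta> $ a is the inner product of 2-forms
  <i(e_a) d\<beta>, \<Phi>>, the exterior derivative d\<beta> being cyclic_D\<beta>.\<close>

definition "\<theta> = (\<chi> a. frobenius (cyclic_D\<beta> $ a) \<Psi> / 2)"
definition "\<delta> = (\<chi> l. - (\<Sum>i\<in>UNIV. ten2 (\<Sum>j\<in>UNIV. E i $ j *\<^sub>R D\<beta> j) (K *v E i) (axis l 1)))"

text \<open>The Christoffel terms cancel in the cyclic sum because \<Gamma> is torsion-free.\<close>

lemma cyclic_D\<beta>_eq: "cyclic_D\<beta> = (\<chi> a c e. d\<beta> a $ c $ e + d\<beta> c $ e $ a + d\<beta> e $ a $ c)"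
proof -
  let ?\<Gamma>\<beta> = "\<lambda>a c e. \<Sum>m\<in>UNIV. \<Gamma> a $ m $ c * \<beta> $ m $ e"
  have "(\<beta> ** \<Gamma> a) $ c $ e = (\<Sum>m\<in>UNIV. - (\<Gamma> a $ m $ e * \<beta> $ m $ c))" for a c e
    unfolding matrix_matrix_mult_def by (simp add: skew_nth[OF \<beta>_skew, of c] mult.commute)
  then have D\<beta>_nth: "D\<beta> a $ c $ e = d\<beta> a $ c $ e - ?\<Gamma>\<beta> a c e + ?\<Gamma>\<beta> a e c" for a c e
    by (simp add: D\<beta>_def sum_negf) (simp add: matrix_matrix_mult_def transpose_def)
  have "?\<Gamma>\<beta> a c e = ?\<Gamma>\<beta> c a e" for a c e
    by (simp add: torsion_free[of a])
  then show ?thesis by (simp add: cyclic_D\<beta>_def D\<beta>_nth vec_eq_iff)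
qed

lemma h_\<Phi>_h: "h ** \<Phi> ** h = \<Psi>"
proof -
  have "h ** \<Phi> ** h = h ** transpose (K ** B)" by (simp add: \<Phi>_def matrix_mul_assoc[symmetric] g_h)
  then show ?thesis by (simp add: \<Psi>_def B_K_commute matrix_transpose_mul h_symmetric)
qed

lemma \<Psi>_skew: "transpose \<Psi> = - \<Psi>"
proof -
  have "transpose \<Psi> = K ** B ** h" by (simp add: \<Psi>_def B_K_commute)
  also have "\<dots> = K ** h ** transpose \<beta> ** h" by (simp add: B_def matrix_mul_assoc)
  also have "K ** h = h ** transpose K" using K_h_symmetric
    by (simp add: matrix_transpose_mul h_symmetric)
  finally have "transpose \<Psi> = h ** transpose K ** transpose \<beta> ** h" .
  moreover have "\<Psi> = - (h ** transpose K ** transpose \<beta> ** h)"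
    by (simp add: \<Psi>_def matrix_transpose_mul h_symmetric transpose_B matrix_ring_simps
        matrix_mul_assoc)
  ultimately show ?thesis by simp
qed

lemma frobenius_D\<beta>_\<Psi>: "frobenius (D\<beta> a) \<Psi> = trace (L ** DB a)"
proof -
  have "frobenius (D\<beta> a) \<Psi> = trace (B ** K ** h ** D\<beta> a)"
    by (simp add: frobenius_eq_trace \<Psi>_def matrix_transpose_mul[symmetric] trace_transpose)
  moreover have "trace (L ** DB a) = - trace (L ** h ** D\<beta> a)"
    by (simp add: DB_def D\<beta>_skew matrix_neg_right trace_neg matrix_mul_assoc)
  moreover have "trace (B ** K ** h ** D\<beta> a) + trace (L ** h ** D\<beta> a) = trace (K ** h ** D\<beta> a)"
    by (simp add: L_eq matrix_ring_simps trace_add[symmetric] trace_sub matrix_mul_assoc)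
  moreover have "trace (K ** h ** D\<beta> a) = 0"
    by (rule trace_symmetric_mult_skew[OF K_h_symmetric D\<beta>_skew])
  ultimately show ?thesis by simp
qed

lemma \<theta>_nth: "\<theta> $ a = trace (L ** DB a) / 2 + (\<Sum>i\<in>UNIV. \<Sum>c\<in>UNIV. D\<beta> i $ c $ a * \<Psi> $ i $ c)"
proof -
  let ?T1 = "\<Sum>p\<in>UNIV. \<Sum>q\<in>UNIV. D\<beta> a $ p $ q * \<Psi> $ p $ q"
  let ?T2 = "\<Sum>p\<in>UNIV. \<Sum>q\<in>UNIV. D\<beta> p $ q $ a * \<Psi> $ p $ q"
  let ?T3 = "\<Sum>p\<in>UNIV. \<Sum>q\<in>UNIV. D\<beta> q $ a $ p * \<Psi> $ p $ q"
  have "\<theta> $ a = (?T1 + ?T2 + ?T3) / 2"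
    by (simp add: \<theta>_def cyclic_D\<beta>_def frobenius_def distrib_right sum.distrib)
  moreover have "?T1 = trace (L ** DB a)" using frobenius_D\<beta>_\<Psi> by (simp add: frobenius_def)
  moreover have "?T3 = ?T2"
  proof -
    have "D\<beta> q $ a $ p * \<Psi> $ p $ q = D\<beta> q $ p $ a * \<Psi> $ q $ p" for p q
      using skew_nth[OF D\<beta>_skew, of q a p] skew_nth[OF \<Psi>_skew, of p q] by simp
    then show ?thesis by (subst sum.swap) simp
  qed
  ultimately show ?thesis by simp
qed

lemma \<theta>_eq: "\<theta> = (\<Sum>i\<in>UNIV. (trace (L ** DB i) / 2) *\<^sub>R axis i 1)
    + (\<Sum>i\<in>UNIV. transpose (D\<beta> i) *v ((B ** K ** h) *v axis i 1))"
proof -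
  have "(\<Sum>i\<in>UNIV. (trace (L ** DB i) / 2) *\<^sub>R (axis i 1 :: real^'n)) $ a
      = trace (L ** DB a) / 2" for a
    by (simp add: sum_component axis_def if_distrib cong: if_cong)
  moreover have "(\<Sum>i\<in>UNIV. transpose (D\<beta> i) *v ((B ** K ** h) *v axis i 1)) $ a
      = (\<Sum>i\<in>UNIV. \<Sum>c\<in>UNIV. D\<beta> i $ c $ a * \<Psi> $ i $ c)" for a
    by (simp add: sum_component matrix_vector_mult_def transpose_def axis_def if_distrib \<Psi>_def
        cong: if_cong)
  ultimately show ?thesis by (simp add: vec_eq_iff \<theta>_nth)
qed

lemma \<delta>_eq: "\<delta> = - (\<Sum>j\<in>UNIV. transpose (D\<beta> j) *v (K *v (h *v axis j 1)))"
proof -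
  have "(\<Sum>i\<in>UNIV. ten2 (\<Sum>j\<in>UNIV. E i $ j *\<^sub>R D\<beta> j) (K *v E i) (axis l 1))
      = (\<Sum>i\<in>UNIV. ten2 (\<Sum>j\<in>UNIV. E i $ j *\<^sub>R (transpose K ** D\<beta> j)) (E i) (axis l 1))" for l
    by (simp add: ten2_matrix_vector_mult_left matrix_mult_sum_right matrix_scalar_ac
        scalar_matrix_assoc[symmetric])
  also have "\<dots> l = (\<Sum>j\<in>UNIV. (h ** (transpose K ** D\<beta> j)) $ j $ l)" for l
    by (simp add: sum_ten2_frame frame_outer_sum matrix_matrix_mult_def)
  also have "\<dots> l = (\<Sum>j\<in>UNIV. transpose (D\<beta> j) *v (K *v (h *v axis j 1))) $ l" for l
  proof -
    have "transpose (D\<beta> j) ** (K ** h) = transpose (h ** (transpose K ** D\<beta> j))" for j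
      by (simp only: matrix_transpose_mul transpose_transpose h_symmetric matrix_mul_assoc)
    then have "(transpose (D\<beta> j) *v (K *v (h *v axis j 1))) $ l
        = (h ** (transpose K ** D\<beta> j)) $ j $ l" for j
      by (simp only: matrix_vector_mul_assoc matrix_vector_mult_axis transpose_nth)
    then show ?thesis by (simp add: sum_component)
  qed
  finally show ?thesis by (simp add: \<delta>_def vec_eq_iff)
qed

lemma DvK_apply:
  "DvK i *v w = v *\<^sub>R ((trace (L ** DB i) / 2) *\<^sub>R (K *v w) + K *v (DB i *v (B *v (K *v w)))
      + K *v (B *v (DB i *v (K *v w))))"
  by (simp add: DvK_def matrix_vector_mult_add_rdistrib scaleR_matrix_vector_mult
      matrix_vector_mul_assoc[symmetric] matrix_vector_right_distrib)

lemma DB_apply: "DB i *v w = h *v (transpose (D\<beta> i) *v w)"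
  by (simp only: DB_def matrix_vector_mul_assoc)

lemma h_\<theta>: "h *v \<theta> = (\<Sum>i\<in>UNIV. (trace (L ** DB i) / 2) *\<^sub>R (h *v axis i 1))
    + (\<Sum>i\<in>UNIV. DB i *v (B *v (K *v (h *v axis i 1))))"
  by (simp only: \<theta>_eq matrix_vector_right_distrib matrix_vector_mult_sum_right
      matrix_vector_mult_scaleR)
    (simp only: DB_def matrix_vector_mul_assoc matrix_mul_assoc)

lemma h_\<delta>: "h *v \<delta> = - (\<Sum>j\<in>UNIV. DB j *v (K *v (h *v axis j 1)))"
  by (simp add: \<delta>_eq matrix_vector_mult_sum_right DB_apply matrix_vector_mult_neg_right)

lemma sum_frobenius_cyclic_D\<beta>:
  "(\<Sum>k\<in>UNIV. (frobenius (interior3 (E k) cyclic_D\<beta>) \<Psi> / 2) *\<^sub>R (K *v E k)) = K *v (h *v \<theta>)"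
proof -
  have "frobenius (interior3 (E k) cyclic_D\<beta>) \<Psi> / 2 = E k \<bullet> \<theta>" for k
    by (simp add: frobenius_interior3 \<theta>_def inner_vec_def sum_divide_distrib)
  then show ?thesis
    by (simp add: frame_expansion[symmetric] matrix_vector_mult_sum_right matrix_vector_mult_scaleR)
qed

lemma sum_DvK_frame:
  "(\<Sum>i\<in>UNIV. DvK i *v (h *v axis i 1)) =
     v *\<^sub>R ((\<Sum>k\<in>UNIV. (frobenius (interior3 (E k) cyclic_D\<beta>) \<Psi> / 2) *\<^sub>R (K *v E k))
       - (K ** B) *v (h *v \<delta>))"
  unfolding sum_frobenius_cyclic_D\<beta>
  by (simp add: DvK_apply h_\<theta> h_\<delta> sum.distrib matrix_vector_mult_sum_right
      matrix_vector_right_distrib matrix_vector_mult_scaleR matrix_vector_mul_assoc[symmetric]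
      matrix_vector_mult_neg_right
      scaleR_sum_right algebra_simps)

lemma sum_ten2_frame_DS:
  "(\<chi> l. \<Sum>k\<in>UNIV. ten2 (\<Sum>i\<in>UNIV. E k $ i *\<^sub>R DS i) (E k) (axis l 1)) =
     g *v (\<Sum>i\<in>UNIV. DvK i *v (h *v axis i 1))"
proof -
  have "(g *v (DvK i *v (h *v axis i 1))) $ l = (h ** DS i) $ i $ l" for i l
  proof -
    have "(g *v (DvK i *v (h *v axis i 1))) $ l = transpose (g ** (DvK i ** h)) $ i $ l"
      by (simp only: matrix_vector_mul_assoc matrix_vector_mult_axis transpose_nth)
    also have "transpose (g ** (DvK i ** h)) = h ** DS i"
      by (simp add: DS_eq matrix_transpose_mul g_symmetric h_symmetric matrix_mul_assoc)
    finally show ?thesis .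
  qed
  then show ?thesis
    by (simp add: sum_ten2_frame frame_outer_sum matrix_matrix_mult_def vec_eq_iff
        matrix_vector_mult_sum_right sum_component)
qed

end

section \<open>The stress-energy tensor on a coordinate patch\<close>

lemma smooth_on_imp_differentiable: "smooth_on U f \<Longrightarrow> x \<in> U \<Longrightarrow> f differentiable (at x)"
  unfolding smooth_on_def by (metis pds.simps(1))

definition christoffel :: "(real^'n::finite \<Rightarrow> real^'n^'n) \<Rightarrow> real^'n \<Rightarrow> 'n \<Rightarrow> real^'n^'n" where
  "christoffel g x i = (\<chi> m j. chr g x m i j)"

lemma covD2_eq:
  "covD2 g T x u = (\<Sum>i\<in>UNIV. u $ i *\<^sub>R
     (matrix_pd i T x - transpose (christoffel g x i) ** T x - T x ** christoffel g x i))"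
  by (simp add: covD2_def vec_eq_iff sum_component matrix_pd_def matrix_matrix_mult_def
      transpose_def christoffel_def algebra_simps sum_subtractf mult.commute)

locale riemannian_two_form =
  fixes U :: "(real^'n::finite) set" and g b :: "real^'n \<Rightarrow> real^'n^'n"
  assumes open_U: "open U" and metric: "riem_metric_on U g" and two_form: "two_form_on U b"
begin

lemma metric_two_form_at: "y \<in> U \<Longrightarrow> metric_two_form (g y) (b y)"
  using metric two_form by (simp add: metric_two_form_def riem_metric_on_def two_form_on_def)

lemma g_symmetric_nth: "y \<in> U \<Longrightarrow> g y $ i $ j = g y $ j $ i"
  using metric_two_form.g_symmetric[OF metric_two_form_at, of y] transpose_nth[of "g y" i j] by simp

lemma matrix_differentiable_g: "x \<in> U \<Longrightarrow> matrix_differentiable g x"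
  using metric smooth_on_imp_differentiable
  unfolding riem_metric_on_def smooth_matrix_on_def matrix_differentiable_def by blast

lemma matrix_differentiable_b: "x \<in> U \<Longrightarrow> matrix_differentiable b x"
  using two_form smooth_on_imp_differentiable
  unfolding two_form_on_def smooth_matrix_on_def matrix_differentiable_def by blast

lemma g_invertible: "y \<in> U \<Longrightarrow> invertible (g y)"
  by (rule metric_two_form.g_invertible[OF metric_two_form_at])

lemma bsharp_eq: "y \<in> U \<Longrightarrow> bsharp g b y = metric_two_form.B (g y) (b y)"
  by (simp add: bsharp_def metric_two_form.B_def[OF metric_two_form_at]
      metric_two_form.h_def[OF metric_two_form_at])

lemma Gb_invertible: "y \<in> U \<Longrightarrow> invertible (Gb g b y)"
  using metric_two_form.G_invertible[OF metric_two_form_at]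
  by (simp add: Gb_def bsharp_eq metric_two_form.G_def[OF metric_two_form_at])

lemma one_plus_bsharp_invertible: "y \<in> U \<Longrightarrow> invertible (mat 1 + bsharp g b y)"
  using metric_two_form.one_plus_B_invertible[OF metric_two_form_at] by (simp add: bsharp_eq)

lemma matrix_differentiable_inv_g: "x \<in> U \<Longrightarrow> matrix_differentiable (\<lambda>y. matrix_inv (g y)) x"
  by (rule matrix_differentiable_inv[OF open_U _ g_invertible matrix_differentiable_g])

lemma matrix_differentiable_bsharp: "x \<in> U \<Longrightarrow> matrix_differentiable (bsharp g b) x"
  unfolding bsharp_def[abs_def]
  by (intro matrix_differentiable_mult matrix_differentiable_inv_g matrix_differentiable_transpose
      matrix_differentiable_b)

lemma matrix_pd_bsharp:
  assumes "x \<in> U"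
  shows "matrix_pd i (bsharp g b) x =
    - (matrix_inv (g x) ** matrix_pd i g x ** matrix_inv (g x)) ** transpose (b x)
      + matrix_inv (g x) ** transpose (matrix_pd i b x)"
  unfolding bsharp_def[abs_def]
  by (simp add: assms matrix_pd_mult matrix_differentiable_inv_g matrix_differentiable_transpose
      matrix_differentiable_b matrix_pd_transpose
      matrix_pd_inv[OF open_U assms g_invertible matrix_differentiable_g])

lemma matrix_differentiable_Gb: "x \<in> U \<Longrightarrow> matrix_differentiable (Gb g b) x"
  unfolding Gb_def[abs_def]
  by (intro matrix_differentiable_diff matrix_differentiable_const matrix_differentiable_mult
      matrix_differentiable_bsharp)

lemma matrix_pd_Gb:
  "x \<in> U \<Longrightarrow> matrix_pd i (Gb g b) x =
    - (matrix_pd i (bsharp g b) x ** bsharp g b x + bsharp g b x ** matrix_pd i (bsharp g b) x)"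
  unfolding Gb_def[abs_def]
  by (simp add: matrix_pd_diff matrix_differentiable_const matrix_differentiable_mult
      matrix_differentiable_bsharp matrix_pd_const matrix_pd_mult)

lemma matrix_differentiable_inv_Gb: "x \<in> U \<Longrightarrow> matrix_differentiable (\<lambda>y. matrix_inv (Gb g b y)) x"
  by (rule matrix_differentiable_inv[OF open_U _ Gb_invertible matrix_differentiable_Gb])

lemma matrix_pd_inv_Gb:
  "x \<in> U \<Longrightarrow> matrix_pd i (\<lambda>y. matrix_inv (Gb g b y)) x =
    - (matrix_inv (Gb g b x) ** matrix_pd i (Gb g b) x ** matrix_inv (Gb g b x))"
  by (rule matrix_pd_inv[OF open_U _ Gb_invertible matrix_differentiable_Gb])

lemma
  assumes "x \<in> U"
  shows vg_differentiable: "vg g b differentiable (at x)"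
    and pd_vg: "pd i (vg g b) x =
      vg g b x / 2 * trace (matrix_inv (mat 1 + bsharp g b x) ** matrix_pd i (bsharp g b) x)"
proof -
  let ?IB = "\<lambda>y. mat 1 + bsharp g b y"
  have IB: "matrix_differentiable ?IB x"
    by (intro matrix_differentiable_add matrix_differentiable_const matrix_differentiable_bsharp
        assms)
  have det_IB: "det (?IB x) \<noteq> 0"
    using one_plus_bsharp_invertible[OF assms] invertible_det_nz by blast
  have vg_eq: "vg g b = (\<lambda>y. sqrt (det (?IB y)))" by (simp add: vg_def fun_eq_iff)
  show "vg g b differentiable (at x)"
    unfolding vg_eq by (rule differentiable_sqrt[OF det_differentiable[OF IB] det_IB])
  have "matrix_pd i ?IB x = matrix_pd i (bsharp g b) x"
    by (simp add: matrix_pd_add matrix_differentiable_const matrix_differentiable_bsharp assms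
        matrix_pd_const)
  then show "pd i (vg g b) x
      = vg g b x / 2 * trace (matrix_inv (?IB x) ** matrix_pd i (bsharp g b) x)"
    unfolding vg_eq
    using pd_sqrt[OF det_differentiable[OF IB] det_IB]
      pd_det[OF IB one_plus_bsharp_invertible[OF assms]]
      det_IB by (simp add: vg_def)
qed

lemma matrix_pd_stress:
  assumes x: "x \<in> U"
  shows "matrix_pd i (stress g b) x = - matrix_pd i g x
     + pd i (vg g b) x *\<^sub>R (transpose (matrix_inv (Gb g b x)) ** g x)
     + vg g b x *\<^sub>R (transpose (matrix_pd i (\<lambda>y. matrix_inv (Gb g b y)) x) ** g x
        + transpose (matrix_inv (Gb g b x)) ** matrix_pd i g x)"
proof -
  have KTg: "matrix_differentiable (\<lambda>y. transpose (matrix_inv (Gb g b y)) ** g y) x"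
    by (intro matrix_differentiable_mult matrix_differentiable_transpose
        matrix_differentiable_inv_Gb
        matrix_differentiable_g x)
  have "stress g b = (\<lambda>y. - g y + vg g b y *\<^sub>R (transpose (matrix_inv (Gb g b y)) ** g y))"
    by (simp add: stress_def end_flat_def fun_eq_iff)
  then have "matrix_pd i (stress g b) x = matrix_pd i (\<lambda>y. - g y) x
      + matrix_pd i (\<lambda>y. vg g b y *\<^sub>R (transpose (matrix_inv (Gb g b y)) ** g y)) x"
    using matrix_pd_add[OF matrix_differentiable_uminus[OF matrix_differentiable_g[OF x]]
        matrix_differentiable_scaleR[OF vg_differentiable[OF x] KTg]] by simp
  then show ?thesis
    by (simp add: matrix_pd_uminus matrix_pd_scaleR matrix_pd_mult matrix_pd_transpose
        matrix_differentiable_transpose matrix_differentiable_inv_Gb matrix_differentiable_g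
        vg_differentiable KTg x add.assoc)
qed

lemma christoffel_symmetric:
  assumes "x \<in> U"
  shows "christoffel g x i $ m $ j = christoffel g x j $ m $ i"
proof -
  have "pd p (\<lambda>y. g y $ i $ j) x = pd p (\<lambda>y. g y $ j $ i) x" for p i j
    by (rule pd_cong_open[OF open_U assms]) (simp add: g_symmetric_nth)
  then show ?thesis by (simp add: christoffel_def chr_def algebra_simps)
qed

lemma matrix_pd_g_eq:
  assumes x: "x \<in> U"
  shows "matrix_pd i g x = transpose (christoffel g x i) ** g x + g x ** christoffel g x i"
proof -
  have dg_sym: "pd p (\<lambda>y. g y $ k $ l) x = pd p (\<lambda>y. g y $ l $ k) x" for p k l
    by (rule pd_cong_open[OF open_U x]) (simp add: g_symmetric_nth)
  define P where
    "P = (\<chi> p j. pd i (\<lambda>y. g y $ p $ j) x + pd j (\<lambda>y. g y $ p $ i) x - pd p (\<lambda>y. g y $ i $ j) x)"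
  have "christoffel g x i = (1/2) *\<^sub>R (matrix_inv (g x) ** P)"
    by (simp add: christoffel_def chr_def P_def vec_eq_iff matrix_matrix_mult_def)
  then have gG: "g x ** christoffel g x i = (1/2) *\<^sub>R P"
    by (simp add: matrix_scalar_ac scalar_matrix_assoc[symmetric] matrix_mul_assoc
        matrix_inv_right[OF g_invertible[OF x]])
  have "transpose (christoffel g x i) ** g x = transpose (g x ** christoffel g x i)"
    using metric_two_form.g_symmetric[OF metric_two_form_at[OF x]]
    by (simp add: matrix_transpose_mul)
  then have Gg: "transpose (christoffel g x i) ** g x = (1/2) *\<^sub>R transpose P"
    by (simp add: gG transpose_scalar)
  have "matrix_pd i g x $ a $ l = ((1/2) *\<^sub>R transpose P + (1/2) *\<^sub>R P) $ a $ l" for a l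
    by (simp add: matrix_pd_def P_def transpose_def dg_sym[of _ a l] dg_sym[of _ i a]
        dg_sym[of _ l i] algebra_simps)
  then show ?thesis by (simp add: Gg gG vec_eq_iff)
qed

lemma matrix_pd_b_skew:
  assumes x: "x \<in> U"
  shows "transpose (matrix_pd i b x) = - matrix_pd i b x"
proof -
  have "transpose (matrix_pd i b x) = matrix_pd i (\<lambda>y. transpose (b y)) x"
    by (simp add: matrix_pd_transpose)
  also have "\<dots> = matrix_pd i (\<lambda>y. - b y) x"
    by (rule matrix_pd_cong_open[OF open_U x])
      (simp add: metric_two_form.\<beta>_skew[OF metric_two_form_at])
  also have "\<dots> = - matrix_pd i b x"
    by (rule matrix_pd_uminus[OF matrix_differentiable_b[OF x]])
  finally show ?thesis .
qed

lemma levi_civita_jet_at: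
  assumes x: "x \<in> U" and E: "orthonormal_frame_on U g E"
  shows "levi_civita_jet (g x) (b x) (christoffel g x) (\<lambda>i. matrix_pd i g x) (\<lambda>i. matrix_pd i b x)
    (\<lambda>k. E k x)"
  using metric_two_form_at[OF x] matrix_pd_b_skew[OF x] matrix_pd_g_eq[OF x]
    christoffel_symmetric[OF x] E x
  by (simp add: levi_civita_jet_def levi_civita_jet_axioms_def orthonormal_frame_on_def gip_def
      ten2_def)

lemma div_stress:
  assumes x: "x \<in> U" and E: "orthonormal_frame_on U g E"
  shows "divT g E (stress g b) x =
            vg g b x *\<^sub>R vflat g x
              ((\<Sum>k\<in>UNIV. ip2 E x (interior3 (E k x) (dform2 b x))
                               (end_flat g x (matrix_inv (Gb g b x) ** bsharp g b x))
                          *\<^sub>R (matrix_inv (Gb g b x) *v E k x))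
               - (matrix_inv (Gb g b x) ** bsharp g b x) *v fsharp g x (delta_b g E b b x))"
proof -
  interpret A: levi_civita_jet "g x" "b x" "christoffel g x" "\<lambda>i. matrix_pd i g x"
    "\<lambda>i. matrix_pd i b x" "\<lambda>k. E k x"
    by (rule levi_civita_jet_at[OF x E])
  have B: "bsharp g b x = A.B" by (simp add: bsharp_def A.B_def A.h_def)
  have K: "matrix_inv (Gb g b x) = A.K" by (simp add: Gb_def A.K_def A.G_def B)
  have dB: "matrix_pd i (bsharp g b) x = A.dB i" for i
    by (simp add: matrix_pd_bsharp[OF x] A.dB_def A.h_def)
  have dK: "matrix_pd i (\<lambda>y. matrix_inv (Gb g b y)) x = A.dK i" for i
    by (simp add: matrix_pd_inv_Gb[OF x] matrix_pd_Gb[OF x] dB B K A.dK_def A.dG_def)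
  have dS: "matrix_pd i (stress g b) x = A.dS i" for i
    by (simp add: matrix_pd_stress[OF x] pd_vg[OF x] dK dB K B A.dS_def A.L_def A.v_def vg_def)
  have S: "stress g b x = A.S" by (simp add: stress_def end_flat_def K A.S_def A.v_def vg_def B)
  let ?\<Theta> = "\<Sum>k\<in>UNIV. (frobenius (interior3 (E k x) A.cyclic_D\<beta>) A.\<Psi> / 2) *\<^sub>R (A.K *v E k x)"
  have "divT g E (stress g b) x =
      (\<chi> l. \<Sum>k\<in>UNIV. ten2 (\<Sum>i\<in>UNIV. E k x $ i *\<^sub>R A.DS i) (E k x) (axis l 1))"
    by (simp add: divT_def covD2_eq dS S A.DS_def)
  also have "\<dots> = g x *v (A.v *\<^sub>R (?\<Theta> - (A.K ** A.B) *v (A.h *v A.\<delta>)))"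
    by (simp only: A.sum_ten2_frame_DS A.sum_DvK_frame)
  finally have div:
    "divT g E (stress g b) x = g x *v (A.v *\<^sub>R (?\<Theta> - (A.K ** A.B) *v (A.h *v A.\<delta>)))" .
  have ip: "ip2 E x W (end_flat g x (A.K ** A.B)) = frobenius W A.\<Psi> / 2" for W
    using ip2_eq_frobenius[of E x A.h, OF A.frame_outer_sum]
    by (simp add: end_flat_def A.\<Phi>_def[symmetric] A.h_\<Phi>_h)
  have dform: "dform2 b x = A.cyclic_D\<beta>"
    unfolding A.cyclic_D\<beta>_eq by (simp add: dform2_def matrix_pd_def)
  have delta: "delta_b g E b b x = A.\<delta>"
    by (simp add: delta_b_def covD2_eq K A.\<delta>_def A.D\<beta>_def)
  show ?thesis
    unfolding div dform delta K B ip
    by (simp add: vflat_def fsharp_def A.h_def A.v_def vg_def B matrix_vector_mult_scaleR)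
qed

lemma div_stress_eq_0:
  assumes "x \<in> U" "orthonormal_frame_on U g E" "dform2 b x = 0" "delta_b g E b b x = 0"
  shows "divT g E (stress g b) x = 0"
proof -
  have "interior3 u 0 = 0" for u :: "real^'n" by (simp add: interior3_def vec_eq_iff)
  moreover have "ip2 E x 0 A = 0" for A by (simp add: ip2_def ten2_def)
  ultimately show ?thesis using div_stress[OF assms(1,2)] assms(3,4)
    by (simp add: fsharp_def vflat_def)
qed

end

theorem proposition3p6:
  fixes U :: "(real^'n) set"
    and g b :: "real^'n \<Rightarrow> real^'n^'n"
    and E :: "'n \<Rightarrow> real^'n \<Rightarrow> real^'n"
  assumes "open U"
    and "riem_metric_on U g"
    and "two_form_on U b"
    and "orthonormal_frame_on U g E"
  shows "(\<forall>x\<in>U. divT g E (stress g b) x =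
            vg g b x *\<^sub>R vflat g x
              ((\<Sum>k\<in>UNIV. ip2 E x (interior3 (E k x) (dform2 b x))
                               (end_flat g x (matrix_inv (Gb g b x) ** bsharp g b x))
                          *\<^sub>R (matrix_inv (Gb g b x) *v E k x))
               - (matrix_inv (Gb g b x) ** bsharp g b x) *v fsharp g x (delta_b g E b b x)))
       \<and> ((\<forall>x\<in>U. dform2 b x = 0 \<and> delta_b g E b b x = 0)
            \<longrightarrow> (\<forall>x\<in>U. divT g E (stress g b) x = 0))"
proof -
  interpret riemannian_two_form U g b
    using assms(1-3) by unfold_locales
  show ?thesis
    using div_stress[OF _ assms(4)] div_stress_eq_0[OF _ assms(4)] by blast
qed

end
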